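(* Consider $n$ agents in the plane with dynamics $\dot x_i(t)=v_i(t)$, $\dot v_i(t)=u_i(t)$, $x_i,v_i,u_i\in\mathbb{R}^2$, $i\in\mathcal V=\{1,\dots,n\}$, and a target with dynamics $\dot x_d=v_d$, $\dot v_d=s_1x_d$, $x_d,v_d\in\mathbb{R}^2$, where $s_1\le 0$ is a constant known to all agents. Let each agent use the controller $$u_i=-k_1x_i-k_2v_i-k_3\epsilon_i-k_4\zeta_i+k_5\eta_i,\qquad \dot\epsilon_i=\zeta_i,\qquad \dot\zeta_i=s_1\epsilon_i+e_i-k_5\eta_i,$$ with internal states $\epsilon_i,\zeta_i\in\mathbb{R}^2$, positive gains $k_1,\dots,k_5$, $e_i=x_i-x_d$ and $\eta_i=\sum_{k\in\mathcal N_i}\alpha(\|x_{i,k}\|)\frac{x_{i,k}}{\|x_{i,k}\|}$ (notation in the context). Then the agents fence the target, i.e. $\lim_{t\to\infty}P_{x_d(t)}(x(t))=0$, if and only if the gains $k_1,k_2,k_3,k_4>0$ satisfy $$k_4-s_1k_2-\frac{k_2^2(k_3-s_1k_1)}{k_1k_2-k_4}>0,\qquad \frac{k_1k_2-k_4}{k_2}>0.$$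
   Context: Fix constants $0<r<R$. Write $x_{i,k}=x_i-x_k$. The (time-varying) neighbor set of agent $i$ is $\mathcal N_i(t)=\{k\in\mathcal V,\ k\ne i:\ \|x_{i,k}(t)\|\le R\}$. The function $\alpha$ is continuous on $(r,\infty)$, with $\alpha(s)=0$ for all $s\ge R$ and $\lim_{s\to r^+}\alpha(s)=\infty$ (the paper notes it is monotonically decreasing on $(r,R]$; an example is $\alpha(s)=\frac1{s-r}-\frac1{R-r}$ for $r<s\le R$, $\alpha(s)=0$ for $s>R$). With $x=(x_1,\dots,x_n)$, the convex hull is $\mathrm{co}(x)=\{\sum_i\lambda_ix_i:\lambda_i\ge0,\sum_i\lambda_i=1\}$ and $P_{x_d}(x)=\min_{s\in\mathrm{co}(x)}\|x_d-s\|$ is the distance from the target to this hull. *)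

theory Defs
  imports "HOL-Analysis.Analysis"
begin

type_synonym vec2 = "real ^ 2"

definition neighbors :: "real \<Rightarrow> nat \<Rightarrow> (nat \<Rightarrow> vec2) \<Rightarrow> nat \<Rightarrow> nat set" where
  "neighbors R n X i = {k. k < n \<and> k \<noteq> i \<and> norm (X i - X k) \<le> R}"

definition eta :: "(real \<Rightarrow> real) \<Rightarrow> real \<Rightarrow> nat \<Rightarrow> (nat \<Rightarrow> vec2) \<Rightarrow> nat \<Rightarrow> vec2" where
  "eta \<alpha> R n X i =
     (\<Sum>k\<in>neighbors R n X i. \<alpha> (norm (X i - X k)) *\<^sub>R ((1 / norm (X i - X k)) *\<^sub>R (X i - X k)))"

definition hull_dist :: "nat \<Rightarrow> (nat \<Rightarrow> vec2) \<Rightarrow> vec2 \<Rightarrow> real" where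
  "hull_dist n X xd = infdist xd (convex hull ((\<lambda>i. X i) ` {..<n}))"

text \<open>(x, v, eps, zeta, xd, vd) is a solution of the closed-loop system on [0,\<infinity>)
  along which the agents stay at mutual distance > r (so that alpha is defined).\<close>
definition closed_loop_solution ::
  "real \<Rightarrow> real \<Rightarrow> real \<Rightarrow> real \<Rightarrow> real \<Rightarrow> real \<Rightarrow> (real \<Rightarrow> real) \<Rightarrow> real \<Rightarrow> real \<Rightarrow> nat \<Rightarrow>
   (nat \<Rightarrow> real \<Rightarrow> vec2) \<Rightarrow> (nat \<Rightarrow> real \<Rightarrow> vec2) \<Rightarrow> (nat \<Rightarrow> real \<Rightarrow> vec2) \<Rightarrow> (nat \<Rightarrow> real \<Rightarrow> vec2) \<Rightarrow>
   (real \<Rightarrow> vec2) \<Rightarrow> (real \<Rightarrow> vec2) \<Rightarrow> bool" where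
  "closed_loop_solution s1 k1 k2 k3 k4 k5 \<alpha> r R n x v \<epsilon> \<zeta> xd vd \<longleftrightarrow>
     (\<forall>t\<ge>0.
        (xd has_vector_derivative vd t) (at t within {0..}) \<and>
        (vd has_vector_derivative (s1 *\<^sub>R xd t)) (at t within {0..}) \<and>
        (\<forall>i<n. \<forall>k<n. i \<noteq> k \<longrightarrow> norm (x i t - x k t) > r) \<and>
        (\<forall>i<n.
           (x i has_vector_derivative v i t) (at t within {0..}) \<and>
           (v i has_vector_derivative
              (- k1 *\<^sub>R x i t - k2 *\<^sub>R v i t - k3 *\<^sub>R \<epsilon> i t - k4 *\<^sub>R \<zeta> i t
               + k5 *\<^sub>R eta \<alpha> R n (\<lambda>j. x j t) i)) (at t within {0..}) \<and>
           (\<epsilon> i has_vector_derivative \<zeta> i t) (at t within {0..}) \<and>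
           (\<zeta> i has_vector_derivative
              (s1 *\<^sub>R \<epsilon> i t + (x i t - xd t) - k5 *\<^sub>R eta \<alpha> R n (\<lambda>j. x j t) i))
              (at t within {0..})))"

end

theory Submission
  imports Defs "HOL-Computational_Algebra.Fundamental_Theorem_Algebra"
begin

(* The repulsion terms of eta cancel in pairs, so the centroid of the agents obeys the linear
   closed loop driven by the target.  Choosing the internal states so that the centroid tracks
   the target exactly gives a particular solution; the deviation from it solves a homogeneous
   fourth-order equation with characteristic polynomial
     (z^2 + k2 z + k1)(z^2 - s1) + k4 z + k3
       = z^4 + k2 z^3 + (k1 - s1) z^2 + (k4 - s1 k2) z + (k3 - s1 k1).
   If this quartic is Hurwitz, the centroid, which lies in the hull, converges to the target.
   Otherwise a root with nonnegative real part yields an exponential mode in which the agents stay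
   more than R apart, hence never interact, while their hull stays away from the target at rest.
   Splitting a real quartic with positive coefficients into two real quadratics shows that it is
   Hurwitz iff a3 (a1 a2 - a3) - a1^2 a4 > 0, which is the stated gain condition. *)

section \<open>Hurwitz criterion for real quartics\<close>

definition quartic :: "real \<Rightarrow> real \<Rightarrow> real \<Rightarrow> real \<Rightarrow> complex \<Rightarrow> complex" where
  "quartic a1 a2 a3 a4 z = z^4 + of_real a1 * z^3 + of_real a2 * z^2 + of_real a3 * z + of_real a4"

definition hurwitz_det3 :: "real \<Rightarrow> real \<Rightarrow> real \<Rightarrow> real \<Rightarrow> real" where
  "hurwitz_det3 a1 a2 a3 a4 = a3 * (a1 * a2 - a3) - a1^2 * a4"

lemma quartic_vieta:
  fixes a1 a2 a3 a4 :: real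
  obtains l0 l1 l2 l3 :: complex where
    "of_real a1 = -(l0 + l1 + l2 + l3)"
    "of_real a2 = l0*l1 + l0*l2 + l0*l3 + l1*l2 + l1*l3 + l2*l3"
    "of_real a3 = -(l0*l1*l2 + l0*l1*l3 + l0*l2*l3 + l1*l2*l3)"
    "of_real a4 = l0*l1*l2*l3"
proof -
  define p :: "complex poly" where "p = [:of_real a4, of_real a3, of_real a2, of_real a1, 1:]"
  have deg: "degree p = 4" and lead: "coeff p 4 = 1"
    unfolding p_def by (simp_all add: numeral_eq_Suc)
  obtain l where "smult (lead_coeff p) (\<Prod>i<degree p. [:- l i, 1:]) = p"
    using complex_poly_decompose' by blast
  then have "(\<Prod>i<4. [:- l i, 1:]) = p"
    by (simp only: deg lead smult_1_left)
  moreover have "(\<Prod>i<4. [:- l i, 1:]) = [:- l 0, 1:] * [:- l 1, 1:] * [:- l 2, 1:] * [:- l 3, 1:]"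
    by (simp add: numeral_eq_Suc lessThan_Suc mult.commute mult.left_commute)
  moreover have "[:- l 0, 1:] * [:- l 1, 1:] * [:- l 2, 1:] * [:- l 3, 1:] =
      [:l 0 * l 1 * l 2 * l 3, -(l 0 * l 1 * l 2 + l 0 * l 1 * l 3 + l 0 * l 2 * l 3 + l 1 * l 2 * l 3),
        l 0 * l 1 + l 0 * l 2 + l 0 * l 3 + l 1 * l 2 + l 1 * l 3 + l 2 * l 3, -(l 0 + l 1 + l 2 + l 3), 1:]"
    by (simp add: algebra_simps)
  ultimately have "[:of_real a4, of_real a3, of_real a2, of_real a1, 1:] =
      [:l 0 * l 1 * l 2 * l 3, -(l 0 * l 1 * l 2 + l 0 * l 1 * l 3 + l 0 * l 2 * l 3 + l 1 * l 2 * l 3),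
        l 0 * l 1 + l 0 * l 2 + l 0 * l 3 + l 1 * l 2 + l 1 * l 3 + l 2 * l 3, -(l 0 + l 1 + l 2 + l 3), 1:]"
    unfolding p_def by simp
  then show ?thesis
    by (intro that[of "l 0" "l 1" "l 2" "l 3"]) (simp_all only: pCons_eq_iff)
qed

lemma quartic_eq_prod_roots:
  assumes "of_real a1 = -(l0 + l1 + l2 + l3)"
    "of_real a2 = l0*l1 + l0*l2 + l0*l3 + l1*l2 + l1*l3 + l2*l3"
    "of_real a3 = -(l0*l1*l2 + l0*l1*l3 + l0*l2*l3 + l1*l2*l3)"
    "of_real a4 = l0*l1*l2*l3"
  shows "quartic a1 a2 a3 a4 z = (z - l0) * (z - l1) * (z - l2) * (z - l3)"
  unfolding quartic_def assms by (simp add: algebra_simps power2_eq_square power3_eq_cube power4_eq_xxxx)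

lemma quartic_eq_quadratic_product:
  assumes "a1 = b1 + b2" "a2 = c1 + c2 + b1*b2" "a3 = b1*c2 + b2*c1" "a4 = c1*c2"
  shows "quartic a1 a2 a3 a4 z = (z^2 + of_real b1 * z + of_real c1) * (z^2 + of_real b2 * z + of_real c2)"
  unfolding quartic_def assms by (simp add: algebra_simps power2_eq_square power3_eq_cube power4_eq_xxxx)

lemma quartic_real_quadratic_factors:
  fixes a1 a2 a3 a4 :: real
  obtains b1 c1 b2 c2 where "a1 = b1 + b2" "a2 = c1 + c2 + b1*b2" "a3 = b1*c2 + b2*c1" "a4 = c1*c2"
proof -
  obtain l0 l1 l2 l3 where vieta:
    "complex_of_real a1 = -(l0 + l1 + l2 + l3)"
    "complex_of_real a2 = l0*l1 + l0*l2 + l0*l3 + l1*l2 + l1*l3 + l2*l3"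
    "complex_of_real a3 = -(l0*l1*l2 + l0*l1*l3 + l0*l2*l3 + l1*l2*l3)"
    "complex_of_real a4 = l0*l1*l2*l3"
    by (rule quartic_vieta)
  show ?thesis
  proof (cases "\<forall>l\<in>{l0, l1, l2, l3}. Im l = 0")
    case True
    then obtain x0 x1 x2 x3 where x_eqs: "l0 = of_real x0" "l1 = of_real x1" "l2 = of_real x2" "l3 = of_real x3"
      by (metis complex_is_Real_iff of_real_Re insertCI)
    have "complex_of_real a1 = of_real (-(x0 + x1 + x2 + x3))"
      "complex_of_real a2 = of_real (x0*x1 + x0*x2 + x0*x3 + x1*x2 + x1*x3 + x2*x3)"
      "complex_of_real a3 = of_real (-(x0*x1*x2 + x0*x1*x3 + x0*x2*x3 + x1*x2*x3))"
      "complex_of_real a4 = of_real (x0*x1*x2*x3)"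
      using vieta unfolding x_eqs by simp_all
    then have "a1 = -(x0 + x1) + -(x2 + x3)" "a2 = x0*x1 + x2*x3 + (-(x0 + x1)) * (-(x2 + x3))"
      "a3 = -(x0 + x1) * (x2*x3) + -(x2 + x3) * (x0*x1)" "a4 = x0*x1 * (x2*x3)"
      by (simp_all only: of_real_eq_iff) (simp_all add: algebra_simps)
    then show ?thesis by (rule that)
  next
    case False
    then obtain l where l: "l \<in> {l0, l1, l2, l3}" "Im l \<noteq> 0" by blast
    then have root: "quartic a1 a2 a3 a4 l = 0"
      using quartic_eq_prod_roots[OF vieta, of l] by auto
    txt \<open>Divide by the real quadratic with roots l and cnj l; the real linear remainder vanishes
      at the nonreal point l, so it is zero.\<close>
    define b1 where "b1 = -2 * Re l"
    define c1 where "c1 = (Re l)^2 + (Im l)^2"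
    define b2 where "b2 = a1 - b1"
    define c2 where "c2 = a2 - c1 - b1*b2"
    define e1 where "e1 = a3 - (b1*c2 + b2*c1)"
    define e0 where "e0 = a4 - c1*c2"
    have "l^2 + of_real b1 * l + of_real c1 = 0"
      unfolding b1_def c1_def by (simp add: complex_eq_iff power2_eq_square algebra_simps)
    moreover have "quartic a1 a2 a3 a4 l
        = (l^2 + of_real b1 * l + of_real c1) * (l^2 + of_real b2 * l + of_real c2) + of_real e1 * l + of_real e0"
      unfolding quartic_def e1_def e0_def c2_def b2_def
      by (simp add: algebra_simps power2_eq_square power3_eq_cube power4_eq_xxxx)
    ultimately have "of_real e1 * l + of_real e0 = 0" using root by simp
    then have "e1 * Im l = 0" "e1 * Re l + e0 = 0" by (simp_all add: complex_eq_iff)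
    with l(2) have "e1 = 0" "e0 = 0" by auto
    then show ?thesis
      by (intro that[of b1 b2 c1 c2]) (simp_all add: e1_def e0_def c2_def b2_def)
  qed
qed

lemma quadratic_root_Re_neg:
  fixes b c :: real and z :: complex
  assumes "b > 0" "c > 0" "z^2 + of_real b * z + of_real c = 0"
  shows "Re z < 0"
proof (rule ccontr)
  assume "\<not> Re z < 0"
  then have "Re z \<ge> 0" by simp
  from assms(3) have re: "(Re z)^2 - (Im z)^2 + b * Re z + c = 0" and im: "Im z * (2 * Re z + b) = 0"
    by (simp_all add: complex_eq_iff power2_eq_square algebra_simps)
  from im \<open>Re z \<ge> 0\<close> assms(1) have "Im z = 0" by auto
  with re have "(Re z)^2 + b * Re z + c = 0" by simp
  moreover have "(Re z)^2 + b * Re z + c > 0"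
    using \<open>Re z \<ge> 0\<close> assms(1,2) zero_le_power2[of "Re z"] mult_nonneg_nonneg[of b "Re z"]
    by linarith
  ultimately show False by simp
qed

lemma quadratic_root_Re_nonneg_exists:
  fixes b c :: real
  assumes "b \<le> 0"
  obtains z :: complex where "z^2 + of_real b * z + of_real c = 0" "Re z \<ge> 0"
proof
  define s where "s = csqrt (of_real (b^2 - 4*c))"
  have "s * s = of_real (b^2 - 4*c)"
    unfolding s_def power2_eq_square[symmetric] by simp
  moreover have "((s - of_real b) / 2)^2 + of_real b * ((s - of_real b) / 2) + of_real c
      = (s * s - of_real (b^2 - 4*c)) / 4"
    by (simp add: power2_eq_square field_simps)
  ultimately show "((s - of_real b) / 2)^2 + of_real b * ((s - of_real b) / 2) + of_real c = 0"
    by simp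
  have "Re s \<ge> 0"
    unfolding s_def by (rule Re_csqrt)
  then show "Re ((s - of_real b) / 2) \<ge> 0"
    using assms by simp
qed

lemma hurwitz_det3_quadratic_factors:
  assumes "a1 = b1 + b2" "a2 = c1 + c2 + b1*b2" "a3 = b1*c2 + b2*c1" "a4 = c1*c2"
  shows "hurwitz_det3 a1 a2 a3 a4 = b1 * b2 * ((c1 - c2)^2 + a1 * a3)"
  unfolding hurwitz_det3_def assms by (simp add: algebra_simps power2_eq_square)

theorem quartic_stable_iff_hurwitz:
  assumes "a1 > 0" "a2 > 0" "a3 > 0" "a4 > 0"
  shows "(\<forall>z. quartic a1 a2 a3 a4 z = 0 \<longrightarrow> Re z < 0) \<longleftrightarrow> hurwitz_det3 a1 a2 a3 a4 > 0"
proof -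
  obtain b1 c1 b2 c2 where F: "a1 = b1 + b2" "a2 = c1 + c2 + b1*b2" "a3 = b1*c2 + b2*c1" "a4 = c1*c2"
    by (rule quartic_real_quadratic_factors)
  have "(c1 - c2)^2 + a1 * a3 > 0"
    using assms by (simp add: add_nonneg_pos)
  then have det: "hurwitz_det3 a1 a2 a3 a4 > 0 \<longleftrightarrow> b1 * b2 > 0"
    unfolding hurwitz_det3_quadratic_factors[OF F] by (simp add: zero_less_mult_iff)
  have roots: "quartic a1 a2 a3 a4 z = 0 \<longleftrightarrow>
      z^2 + of_real b1 * z + of_real c1 = 0 \<or> z^2 + of_real b2 * z + of_real c2 = 0" for z
    unfolding quartic_eq_quadratic_product[OF F] by simp
  show ?thesis
  proof
    assume stable: "\<forall>z. quartic a1 a2 a3 a4 z = 0 \<longrightarrow> Re z < 0"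
    have "\<not> b1 \<le> 0" "\<not> b2 \<le> 0"
      using quadratic_root_Re_nonneg_exists[of b1 c1] quadratic_root_Re_nonneg_exists[of b2 c2]
        stable roots by (metis not_le)+
    then show "hurwitz_det3 a1 a2 a3 a4 > 0" unfolding det by simp
  next
    assume "hurwitz_det3 a1 a2 a3 a4 > 0"
    then have "b1 * b2 > 0" unfolding det .
    with F(1) assms(1) have b: "b1 > 0" "b2 > 0"
      by (auto simp: zero_less_mult_iff)
    with F(3,4) assms(3,4) have c: "c1 > 0" "c2 > 0"
      by (auto simp: zero_less_mult_iff) (smt (verit) mult_pos_neg)+
    show "\<forall>z. quartic a1 a2 a3 a4 z = 0 \<longrightarrow> Re z < 0"
      using quadratic_root_Re_neg b c roots by blast
  qed
qed

section \<open>Stable linear differential equations\<close>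

lemma tendsto_0_of_differential_inequality:
  fixes N N' h :: "real \<Rightarrow> real" and mu :: real
  assumes mu: "mu > 0"
    and deriv: "\<And>t. t > 0 \<Longrightarrow> (N has_real_derivative N' t) (at t)"
    and ineq: "\<And>t. t > 0 \<Longrightarrow> N' t \<le> - mu * N t + h t"
    and h: "(h \<longlongrightarrow> 0) at_top"
    and nonneg: "\<And>t. N t \<ge> 0"
  shows "(N \<longlongrightarrow> 0) at_top"
proof (rule order_tendstoI)
  fix e :: real assume "e < 0"
  with nonneg show "eventually (\<lambda>t. e < N t) at_top"
    by (simp add: less_le_trans)
next
  fix e :: real assume e: "e > 0"
  have "eventually (\<lambda>t. h t < mu * e / 2) at_top"
    by (rule order_tendstoD(2)[OF h]) (use mu e in simp)
  then obtain T0 where T0: "\<And>t. t \<ge> T0 \<Longrightarrow> h t < mu * e / 2"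
    unfolding eventually_at_top_linorder by blast
  define T where "T = max T0 1"
  define Phi where "Phi t = exp (mu * t) * (N t - e / 2)" for t
  have Phi_le: "Phi t \<le> Phi T" if "t \<ge> T" for t
  proof (rule DERIV_nonpos_imp_nonincreasing[OF that])
    fix s assume "T \<le> s"
    then have s: "s > 0" "s \<ge> T0" unfolding T_def by auto
    have "(Phi has_real_derivative exp (mu * s) * (mu * (N s - e / 2) + N' s)) (at s)"
      unfolding Phi_def[abs_def]
      by (auto intro!: derivative_eq_intros deriv[OF s(1)] simp: algebra_simps)
    moreover have "mu * (N s - e / 2) + N' s \<le> 0"
      using ineq[OF s(1)] T0[OF s(2)] by (simp add: algebra_simps)
    ultimately show "\<exists>y. (Phi has_real_derivative y) (at s) \<and> y \<le> 0"
      by (meson exp_ge_zero mult_nonneg_nonpos)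
  qed
  have "filterlim (\<lambda>t. - (mu * t)) at_bot at_top"
    by (rule filterlim_compose[OF filterlim_uminus_at_bot_at_top
          filterlim_tendsto_pos_mult_at_top[OF tendsto_const mu filterlim_ident]])
  then have "((\<lambda>t. Phi T * exp (- (mu * t))) \<longlongrightarrow> Phi T * 0) at_top"
    by (intro tendsto_mult tendsto_const filterlim_compose[OF exp_at_bot])
  then have "eventually (\<lambda>t. Phi T * exp (- (mu * t)) < e / 2) at_top"
    using e by (intro order_tendstoD(2)) auto
  moreover have "eventually (\<lambda>t. t \<ge> T) at_top"
    by (rule eventually_ge_at_top)
  ultimately show "eventually (\<lambda>t. N t < e) at_top"
  proof eventually_elim
    case (elim t)
    have "exp (mu * t) * (N t - e / 2) \<le> Phi T"
      using Phi_le[OF elim(2)] unfolding Phi_def .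
    then have "N t - e / 2 \<le> Phi T * exp (- (mu * t))"
      by (simp add: exp_minus field_simps mult.commute)
    with elim(1) show ?case by simp
  qed
qed

lemma has_real_derivative_norm_power2:
  fixes f :: "real \<Rightarrow> 'a :: real_inner"
  assumes "(f has_vector_derivative d) (at t)"
  shows "((\<lambda>t. (norm (f t))^2) has_real_derivative 2 * inner (f t) d) (at t)"
proof -
  have df: "(f has_derivative (\<lambda>h. h *\<^sub>R d)) (at t)"
    using assms unfolding has_vector_derivative_def .
  have "((\<lambda>t. inner (f t) (f t)) has_derivative (\<lambda>h. inner (f t) (h *\<^sub>R d) + inner (h *\<^sub>R d) (f t))) (at t)"
    using has_derivative_inner[OF df df] .
  then show ?thesis
    unfolding has_field_derivative_def power2_norm_eq_inner
    by (rule has_derivative_eq_rhs) (simp add: fun_eq_iff inner_commute algebra_simps)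
qed

lemma tendsto_0_linear_ode1:
  fixes f g :: "real \<Rightarrow> complex" and l :: complex
  assumes l: "Re l < 0"
    and deriv: "\<And>t. t \<ge> 0 \<Longrightarrow> (f has_vector_derivative l * f t + g t) (at t within {0..})"
    and g: "(g \<longlongrightarrow> 0) at_top"
  shows "(f \<longlongrightarrow> 0) at_top"
proof -
  define mu where "mu = - Re l"
  have mu: "mu > 0" using l unfolding mu_def by simp
  have "((\<lambda>t. (norm (f t))^2) \<longlongrightarrow> 0) at_top"
  proof (rule tendsto_0_of_differential_inequality[OF mu])
    fix t :: real assume t: "t > 0"
    have "at t within {0..} = at t"
      using t by (intro at_within_interior) simp
    then show "((\<lambda>t. (norm (f t))^2) has_real_derivative 2 * inner (f t) (l * f t + g t)) (at t)"
      using deriv[of t] t by (intro has_real_derivative_norm_power2) simp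
    have "0 \<le> (norm (mu *\<^sub>R f t - g t))^2"
      by simp
    also have "\<dots> = mu^2 * (norm (f t))^2 - 2 * mu * inner (f t) (g t) + (norm (g t))^2"
      unfolding power2_norm_eq_inner
      by (simp add: inner_diff_left inner_diff_right inner_commute power2_eq_square algebra_simps)
    finally have "2 * inner (f t) (g t) \<le> mu * (norm (f t))^2 + (norm (g t))^2 / mu"
      using mu by (simp add: field_simps power2_eq_square)
    moreover have "inner (f t) (l * f t) = - mu * (norm (f t))^2"
      unfolding mu_def cmod_power2 inner_complex_def by (simp add: algebra_simps power2_eq_square)
    ultimately show "2 * inner (f t) (l * f t + g t) \<le> - mu * (norm (f t))^2 + (norm (g t))^2 / mu"
      by (simp add: inner_add_right)
  next
    have "((\<lambda>t. (norm (g t))^2) \<longlongrightarrow> 0) at_top"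
      using tendsto_power[OF tendsto_norm[OF g], of 2] by simp
    then show "((\<lambda>t. (norm (g t))^2 / mu) \<longlongrightarrow> 0) at_top"
      by (rule tendsto_divide_zero)
  qed simp
  then have "((\<lambda>t. sqrt ((norm (f t))^2)) \<longlongrightarrow> sqrt 0) at_top"
    by (rule tendsto_real_sqrt)
  then have "((\<lambda>t. norm (f t)) \<longlongrightarrow> 0) at_top"
    by simp
  then show ?thesis
    by (rule tendsto_norm_zero_cancel)
qed

lemma tendsto_0_linear_ode4:
  fixes y0 y1 y2 y3 :: "real \<Rightarrow> real" and a1 a2 a3 a4 :: real
  assumes stable: "\<forall>z. quartic a1 a2 a3 a4 z = 0 \<longrightarrow> Re z < 0"
    and d0: "\<And>t. t \<ge> 0 \<Longrightarrow> (y0 has_real_derivative y1 t) (at t within {0..})"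
    and d1: "\<And>t. t \<ge> 0 \<Longrightarrow> (y1 has_real_derivative y2 t) (at t within {0..})"
    and d2: "\<And>t. t \<ge> 0 \<Longrightarrow> (y2 has_real_derivative y3 t) (at t within {0..})"
    and d3: "\<And>t. t \<ge> 0 \<Longrightarrow>
      (y3 has_real_derivative - (a4 * y0 t + a3 * y1 t + a2 * y2 t + a1 * y3 t)) (at t within {0..})"
  shows "(y0 \<longlongrightarrow> 0) at_top \<and> (y1 \<longlongrightarrow> 0) at_top \<and> (y2 \<longlongrightarrow> 0) at_top \<and> (y3 \<longlongrightarrow> 0) at_top"
proof -
  obtain l0 l1 l2 l3 where vieta:
    "complex_of_real a1 = -(l0 + l1 + l2 + l3)"
    "complex_of_real a2 = l0*l1 + l0*l2 + l0*l3 + l1*l2 + l1*l3 + l2*l3"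
    "complex_of_real a3 = -(l0*l1*l2 + l0*l1*l3 + l0*l2*l3 + l1*l2*l3)"
    "complex_of_real a4 = l0*l1*l2*l3"
    by (rule quartic_vieta)
  have "Re l < 0" if "l \<in> {l0, l1, l2, l3}" for l
    using stable quartic_eq_prod_roots[OF vieta, of l] that by auto
  then have re: "Re l0 < 0" "Re l1 < 0" "Re l2 < 0" "Re l3 < 0"
    by simp_all
  define Y0 Y1 Y2 Y3 where "Y0 t = complex_of_real (y0 t)" "Y1 t = complex_of_real (y1 t)"
    "Y2 t = complex_of_real (y2 t)" "Y3 t = complex_of_real (y3 t)" for t
  txt \<open>Factor the differential operator along the roots: w1, w2, w3 result from applying
    D - l0, then D - l1, then D - l2 to y0, and D - l3 annihilates w3.\<close>
  define w1 where "w1 t = Y1 t - l0 * Y0 t" for t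
  define w2 where "w2 t = Y2 t - (l0 + l1) * Y1 t + l0 * l1 * Y0 t" for t
  define w3 where "w3 t = Y3 t - (l0 + l1 + l2) * Y2 t + (l0*l1 + l0*l2 + l1*l2) * Y1 t
    - l0 * l1 * l2 * Y0 t" for t
  have dY: "(Y0 has_vector_derivative Y1 t) (at t within {0..})"
      "(Y1 has_vector_derivative Y2 t) (at t within {0..})"
      "(Y2 has_vector_derivative Y3 t) (at t within {0..})"
      "(Y3 has_vector_derivative - (a4 * Y0 t + a3 * Y1 t + a2 * Y2 t + a1 * Y3 t)) (at t within {0..})"
    if "t \<ge> 0" for t
    unfolding Y0_Y1_Y2_Y3_def[abs_def]
    using has_vector_derivative_of_real[OF d0[OF that]] has_vector_derivative_of_real[OF d1[OF that]]
      has_vector_derivative_of_real[OF d2[OF that]] has_vector_derivative_of_real[OF d3[OF that]]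
    by simp_all
  note linear_rules = has_vector_derivative_diff has_vector_derivative_add has_vector_derivative_mult_right
  have "(Y0 has_vector_derivative l0 * Y0 t + w1 t) (at t within {0..})" if "t \<ge> 0" for t
    using dY(1)[OF that] by (simp add: w1_def)
  moreover have "(w1 has_vector_derivative l1 * w1 t + w2 t) (at t within {0..})" if "t \<ge> 0" for t
    unfolding w1_def[abs_def]
    by (rule has_vector_derivative_eq_rhs, (rule linear_rules dY[OF that])+)
      (simp add: w1_def w2_def algebra_simps)
  moreover have "(w2 has_vector_derivative l2 * w2 t + w3 t) (at t within {0..})" if "t \<ge> 0" for t
    unfolding w2_def[abs_def]
    by (rule has_vector_derivative_eq_rhs, (rule linear_rules dY[OF that])+)
      (simp add: w2_def w3_def algebra_simps)
  moreover have "(w3 has_vector_derivative l3 * w3 t + 0) (at t within {0..})" if "t \<ge> 0" for t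
    unfolding w3_def[abs_def]
    by (rule has_vector_derivative_eq_rhs, (rule linear_rules dY[OF that])+)
      (simp add: w3_def vieta algebra_simps)
  ultimately have w: "(w3 \<longlongrightarrow> 0) at_top" "(w2 \<longlongrightarrow> 0) at_top" "(w1 \<longlongrightarrow> 0) at_top"
    and Y0: "(Y0 \<longlongrightarrow> 0) at_top"
    using tendsto_0_linear_ode1 re by (metis tendsto_const)+
  have "Y1 = (\<lambda>t. w1 t + l0 * Y0 t)"
    unfolding w1_def by simp
  moreover have "((\<lambda>t. w1 t + l0 * Y0 t) \<longlongrightarrow> 0 + l0 * 0) at_top"
    by (intro tendsto_intros w Y0)
  ultimately have Y1: "(Y1 \<longlongrightarrow> 0) at_top"
    by simp
  have "Y2 = (\<lambda>t. w2 t + (l0 + l1) * Y1 t - l0 * l1 * Y0 t)"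
    unfolding w2_def by simp
  moreover have "((\<lambda>t. w2 t + (l0 + l1) * Y1 t - l0 * l1 * Y0 t) \<longlongrightarrow> 0 + (l0 + l1) * 0 - l0 * l1 * 0) at_top"
    by (intro tendsto_intros w Y0 Y1)
  ultimately have Y2: "(Y2 \<longlongrightarrow> 0) at_top"
    by simp
  have "Y3 = (\<lambda>t. w3 t + (l0 + l1 + l2) * Y2 t - (l0*l1 + l0*l2 + l1*l2) * Y1 t + l0 * l1 * l2 * Y0 t)"
    unfolding w3_def by simp
  moreover have "((\<lambda>t. w3 t + (l0 + l1 + l2) * Y2 t - (l0*l1 + l0*l2 + l1*l2) * Y1 t + l0 * l1 * l2 * Y0 t)
      \<longlongrightarrow> 0 + (l0 + l1 + l2) * 0 - (l0*l1 + l0*l2 + l1*l2) * 0 + l0 * l1 * l2 * 0) at_top"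
    by (intro tendsto_intros w Y0 Y1 Y2)
  ultimately have Y3: "(Y3 \<longlongrightarrow> 0) at_top"
    by simp
  from Y0 Y1 Y2 Y3 show ?thesis
    unfolding Y0_Y1_Y2_Y3_def by (simp add: tendsto_of_real_iff[where 'a = complex, of _ 0, simplified])
qed

section \<open>The centroid of the swarm\<close>

lemma sum_eta_eq_0: "(\<Sum>i<n. eta \<alpha> R n X i) = 0"
proof -
  define F where "F p = \<alpha> (norm (X (fst p) - X (snd p))) *\<^sub>R
    ((1 / norm (X (fst p) - X (snd p))) *\<^sub>R (X (fst p) - X (snd p)))" for p
  define S where "S = Sigma {..<n} (neighbors R n X)"
  have "finite (neighbors R n X i)" for i
    unfolding neighbors_def by auto
  then have sum_S: "(\<Sum>i<n. eta \<alpha> R n X i) = (\<Sum>p\<in>S. F p)"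
    unfolding eta_def F_def S_def by (simp add: sum.Sigma case_prod_beta')
  txt \<open>The neighbour relation is symmetric and the pairwise terms are antisymmetric.\<close>
  have "(\<Sum>p\<in>S. F p) = (\<Sum>p\<in>S. F (prod.swap p))"
    by (rule sum.reindex_bij_witness[of _ prod.swap prod.swap])
      (auto simp: S_def neighbors_def norm_minus_commute)
  also have "\<dots> = - (\<Sum>p\<in>S. F p)"
    by (simp add: F_def norm_minus_commute sum_negf[symmetric] scaleR_diff_right)
  finally have "(\<Sum>p\<in>S. F p) = 0"
    by (simp add: eq_neg_iff_add_eq_0 scaleR_2[symmetric])
  then show ?thesis
    unfolding sum_S .
qed

definition centroid :: "nat \<Rightarrow> (nat \<Rightarrow> 'a :: real_vector) \<Rightarrow> 'a" where
  "centroid n X = (1 / real n) *\<^sub>R (\<Sum>i<n. X i)"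

lemma centroid_in_convex_hull:
  assumes "n \<ge> 1"
  shows "centroid n X \<in> convex hull (X ` {..<n})"
proof -
  have "(\<Sum>i<n. (1 / real n) *\<^sub>R X i) \<in> convex hull (X ` {..<n})"
    using assms by (intro convex_sum) (auto intro: hull_inc)
  then show ?thesis
    unfolding centroid_def by (simp add: scaleR_sum_right)
qed

lemma centroid_add: "centroid n (\<lambda>i. X i + Y i) = centroid n X + centroid n Y"
  unfolding centroid_def by (simp add: sum.distrib scaleR_add_right)

lemma centroid_diff: "centroid n (\<lambda>i. X i - Y i) = centroid n X - centroid n Y"
  unfolding centroid_def by (simp add: sum_subtractf scaleR_diff_right)

lemma centroid_scaleR: "centroid n (\<lambda>i. a *\<^sub>R X i) = a *\<^sub>R centroid n X"
  unfolding centroid_def by (simp add: scaleR_sum_right[symmetric])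

lemma centroid_uminus: "centroid n (\<lambda>i. - X i) = - centroid n X"
  unfolding centroid_def by (simp add: sum_negf)

lemma centroid_const:
  assumes "n \<ge> 1"
  shows "centroid n (\<lambda>i. c) = c"
  using assms unfolding centroid_def by (simp add: sum_constant_scaleR del: sum_constant)

lemma centroid_eta_eq_0: "centroid n (eta \<alpha> R n X) = 0"
  unfolding centroid_def sum_eta_eq_0 by simp

lemma has_vector_derivative_centroid:
  assumes "\<And>i. i < n \<Longrightarrow> (f i has_vector_derivative f' i) F"
  shows "((\<lambda>t. centroid n (\<lambda>i. f i t)) has_vector_derivative centroid n f') F"
  unfolding centroid_def
  by (intro bounded_linear.has_vector_derivative[OF bounded_linear_scaleR_right]
      has_vector_derivative_sum) (use assms in auto)

lemma has_real_derivative_vec_nth: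
  assumes "(f has_vector_derivative f') F"
  shows "((\<lambda>t. f t $ j) has_real_derivative f' $ j) F"
  using bounded_linear.has_vector_derivative[OF bounded_linear_vec_nth assms]
  by (simp add: has_real_derivative_iff_has_vector_derivative)

section \<open>Sufficiency of the gain condition\<close>

lemma quartic_closed_loop:
  "quartic k2 (k1 - s1) (k4 - s1 * k2) (k3 - s1 * k1) z
    = (z^2 + of_real k2 * z + of_real k1) * (z^2 - of_real s1) + (of_real k4 * z + of_real k3)"
  unfolding quartic_def by (simp add: algebra_simps power2_eq_square power3_eq_cube power4_eq_xxxx)

lemma internal_model_coefficients:
  fixes k1 k2 k3 k4 s1 :: real
  assumes "k3 > 0" "s1 \<le> 0"
  obtains al be where "k3 * al + k4 * s1 * be + (k1 + s1) = 0" "k4 * al + k3 * be + k2 = 0"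
proof
  define det where "det = k3^2 - k4^2 * s1"
  have "k4^2 * s1 \<le> 0" "k3^2 > 0"
    using assms by (simp_all add: mult_nonneg_nonpos)
  then have "det > 0"
    unfolding det_def by linarith
  then show "k3 * ((k2 * k4 * s1 - (k1 + s1) * k3) / det) + k4 * s1 * (((k1 + s1) * k4 - k2 * k3) / det)
      + (k1 + s1) = 0"
    and "k4 * ((k2 * k4 * s1 - (k1 + s1) * k3) / det) + k3 * (((k1 + s1) * k4 - k2 * k3) / det) + k2 = 0"
    by (simp_all add: field_simps) (simp_all add: det_def algebra_simps power2_eq_square)
qed

lemma tendsto_tracking_error_scalar:
  fixes X V E Z xd vd :: "real \<Rightarrow> real" and k1 k2 k3 k4 s1 :: real
  assumes stable: "\<forall>z. quartic k2 (k1 - s1) (k4 - s1 * k2) (k3 - s1 * k1) z = 0 \<longrightarrow> Re z < 0"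
    and k3: "k3 > 0" and s1: "s1 \<le> 0"
    and dX: "\<And>t. t \<ge> 0 \<Longrightarrow> (X has_real_derivative V t) (at t within {0..})"
    and dV: "\<And>t. t \<ge> 0 \<Longrightarrow>
      (V has_real_derivative - k1 * X t - k2 * V t - k3 * E t - k4 * Z t) (at t within {0..})"
    and dE: "\<And>t. t \<ge> 0 \<Longrightarrow> (E has_real_derivative Z t) (at t within {0..})"
    and dZ: "\<And>t. t \<ge> 0 \<Longrightarrow> (Z has_real_derivative s1 * E t + X t - xd t) (at t within {0..})"
    and dxd: "\<And>t. t \<ge> 0 \<Longrightarrow> (xd has_real_derivative vd t) (at t within {0..})"
    and dvd: "\<And>t. t \<ge> 0 \<Longrightarrow> (vd has_real_derivative s1 * xd t) (at t within {0..})"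
  shows "((\<lambda>t. X t - xd t) \<longlongrightarrow> 0) at_top"
proof -
  obtain al be where model: "k3 * al + k4 * s1 * be + (k1 + s1) = 0" "k4 * al + k3 * be + k2 = 0"
    using internal_model_coefficients[OF k3 s1] .
  txt \<open>With these coefficients (X, E) = (xd, al xd + be vd) solves the loop exactly, so the deviation
    of E from it satisfies the homogeneous equation whose characteristic polynomial is the quartic.\<close>
  define y0 y1 y2 y3 where "y0 t = E t - (al * xd t + be * vd t)"
    "y1 t = Z t - (al * vd t + be * (s1 * xd t))"
    "y2 t = s1 * y0 t + (X t - xd t)" "y3 t = s1 * y1 t + (V t - vd t)" for t
  note rules = DERIV_add DERIV_diff DERIV_cmult
  have d0: "(y0 has_real_derivative y1 t) (at t within {0..})" if "t \<ge> 0" for t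
    unfolding y0_y1_y2_y3_def[abs_def]
    by (rule DERIV_cong, (rule rules dE dxd dvd that)+) simp
  have d1: "(y1 has_real_derivative y2 t) (at t within {0..})" if "t \<ge> 0" for t
    unfolding y0_y1_y2_y3_def[abs_def]
    by (rule DERIV_cong, (rule rules dZ dxd dvd that)+) (simp add: algebra_simps)
  have d2: "(y2 has_real_derivative y3 t) (at t within {0..})" if "t \<ge> 0" for t
    unfolding y0_y1_y2_y3_def[abs_def]
    by (rule DERIV_cong, (rule rules dE dxd dvd dX that)+) (simp add: algebra_simps)
  have d3: "(y3 has_real_derivative - ((k3 - s1 * k1) * y0 t + (k4 - s1 * k2) * y1 t + (k1 - s1) * y2 t
      + k2 * y3 t)) (at t within {0..})" if "t \<ge> 0" for t
  proof (rule DERIV_cong)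
    show "(y3 has_real_derivative s1 * (s1 * E t + X t - xd t - (al * (s1 * xd t) + be * (s1 * vd t)))
        + (- k1 * X t - k2 * V t - k3 * E t - k4 * Z t - s1 * xd t)) (at t within {0..})"
      unfolding y0_y1_y2_y3_def[abs_def] by (rule rules dZ dV dxd dvd that)+
    have "s1 * (s1 * E t + X t - xd t - (al * (s1 * xd t) + be * (s1 * vd t)))
        + (- k1 * X t - k2 * V t - k3 * E t - k4 * Z t - s1 * xd t)
        + ((k3 - s1 * k1) * y0 t + (k4 - s1 * k2) * y1 t + (k1 - s1) * y2 t + k2 * y3 t)
      = - xd t * (k3 * al + k4 * s1 * be + (k1 + s1)) - vd t * (k4 * al + k3 * be + k2)"
      unfolding y0_y1_y2_y3_def by (simp add: algebra_simps)
    then show "s1 * (s1 * E t + X t - xd t - (al * (s1 * xd t) + be * (s1 * vd t)))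
        + (- k1 * X t - k2 * V t - k3 * E t - k4 * Z t - s1 * xd t)
      = - ((k3 - s1 * k1) * y0 t + (k4 - s1 * k2) * y1 t + (k1 - s1) * y2 t + k2 * y3 t)"
      unfolding model by simp
  qed
  have "(y0 \<longlongrightarrow> 0) at_top" "(y2 \<longlongrightarrow> 0) at_top"
    using tendsto_0_linear_ode4[OF stable d0 d1 d2 d3] by simp_all
  then have "((\<lambda>t. y2 t - s1 * y0 t) \<longlongrightarrow> 0 - s1 * 0) at_top"
    by (intro tendsto_intros)
  then show ?thesis
    unfolding y0_y1_y2_y3_def by simp
qed

lemma closed_loop_centroid_tracks_target:
  assumes stable: "\<forall>z. quartic k2 (k1 - s1) (k4 - s1 * k2) (k3 - s1 * k1) z = 0 \<longrightarrow> Re z < 0"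
    and k3: "k3 > 0" and s1: "s1 \<le> 0" and n: "n \<ge> 1"
    and sol: "closed_loop_solution s1 k1 k2 k3 k4 k5 \<alpha> r R n x v \<epsilon> \<zeta> xd vd"
  shows "((\<lambda>t. centroid n (\<lambda>i. x i t) - xd t) \<longlongrightarrow> 0) at_top"
proof -
  define xc vc ec zc where "xc t = centroid n (\<lambda>i. x i t)" "vc t = centroid n (\<lambda>i. v i t)"
    "ec t = centroid n (\<lambda>i. \<epsilon> i t)" "zc t = centroid n (\<lambda>i. \<zeta> i t)" for t
  note centroid_simps = centroid_add centroid_diff centroid_scaleR centroid_uminus centroid_eta_eq_0
    centroid_const[OF n]
  have dc: "(xc has_vector_derivative vc t) (at t within {0..})"
    "(vc has_vector_derivative - k1 *\<^sub>R xc t - k2 *\<^sub>R vc t - k3 *\<^sub>R ec t - k4 *\<^sub>R zc t)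
      (at t within {0..})"
    "(ec has_vector_derivative zc t) (at t within {0..})"
    "(zc has_vector_derivative s1 *\<^sub>R ec t + xc t - xd t) (at t within {0..})"
    "(xd has_vector_derivative vd t) (at t within {0..})"
    "(vd has_vector_derivative s1 *\<^sub>R xd t) (at t within {0..})"
    if "t \<ge> 0" for t
    using sol that unfolding closed_loop_solution_def xc_vc_ec_zc_def[abs_def]
    by (auto intro!: has_vector_derivative_centroid[THEN has_vector_derivative_eq_rhs]
        simp: centroid_simps)
  have "((\<lambda>t. xc t $ j) has_real_derivative vc t $ j) (at t within {0..})"
    and "((\<lambda>t. vc t $ j) has_real_derivative - k1 * xc t $ j - k2 * vc t $ j - k3 * ec t $ j
      - k4 * zc t $ j) (at t within {0..})"
    and "((\<lambda>t. ec t $ j) has_real_derivative zc t $ j) (at t within {0..})"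
    and "((\<lambda>t. zc t $ j) has_real_derivative s1 * ec t $ j + xc t $ j - xd t $ j) (at t within {0..})"
    and "((\<lambda>t. xd t $ j) has_real_derivative vd t $ j) (at t within {0..})"
    and "((\<lambda>t. vd t $ j) has_real_derivative s1 * xd t $ j) (at t within {0..})"
    if "t \<ge> 0" for t j
    using dc[OF that, THEN has_real_derivative_vec_nth[where j = j]] by simp_all
  then have "((\<lambda>t. xc t $ j - xd t $ j) \<longlongrightarrow> 0) at_top" for j
    by (rule tendsto_tracking_error_scalar[OF stable k3 s1])
  then have "((\<lambda>t. xc t - xd t) \<longlongrightarrow> 0) at_top"
    by (intro vec_tendstoI) simp
  then show ?thesis
    unfolding xc_vc_ec_zc_def .
qed

lemma closed_loop_fences_target:
  assumes "\<forall>z. quartic k2 (k1 - s1) (k4 - s1 * k2) (k3 - s1 * k1) z = 0 \<longrightarrow> Re z < 0"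
    and "k3 > 0" "s1 \<le> 0" "n \<ge> 1"
    and "closed_loop_solution s1 k1 k2 k3 k4 k5 \<alpha> r R n x v \<epsilon> \<zeta> xd vd"
  shows "((\<lambda>t. hull_dist n (\<lambda>i. x i t) (xd t)) \<longlongrightarrow> 0) at_top"
proof (rule Lim_null_comparison)
  show "((\<lambda>t. norm (centroid n (\<lambda>i. x i t) - xd t)) \<longlongrightarrow> 0) at_top"
    using closed_loop_centroid_tracks_target[OF assms] by (rule tendsto_norm_zero)
  have "hull_dist n (\<lambda>i. x i t) (xd t) \<le> dist (xd t) (centroid n (\<lambda>i. x i t))" for t
    unfolding hull_dist_def using centroid_in_convex_hull[OF \<open>n \<ge> 1\<close>] by (rule infdist_le)
  then show "eventually (\<lambda>t. norm (hull_dist n (\<lambda>i. x i t) (xd t))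
      \<le> norm (centroid n (\<lambda>i. x i t) - xd t)) at_top"
    by (simp add: hull_dist_def dist_norm norm_minus_commute infdist_nonneg)
qed

section \<open>Necessity of the gain condition\<close>

definition vec_of_complex :: "complex \<Rightarrow> vec2" where
  "vec_of_complex z = (\<chi> j. if j = 1 then Re z else Im z)"

lemma vec_of_complex_nth: "vec_of_complex z $ 1 = Re z" "vec_of_complex z $ 2 = Im z"
  by (simp_all add: vec_of_complex_def)

lemma vec_of_complex_add: "vec_of_complex z + vec_of_complex w = vec_of_complex (z + w)"
  and vec_of_complex_diff: "vec_of_complex z - vec_of_complex w = vec_of_complex (z - w)"
  and vec_of_complex_uminus: "- vec_of_complex z = vec_of_complex (- z)"
  and vec_of_complex_scaleR: "a *\<^sub>R vec_of_complex z = vec_of_complex (a *\<^sub>R z)"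
  and vec_of_complex_0: "vec_of_complex 0 = 0"
  by (simp_all add: vec_of_complex_def vec_eq_iff)

lemma vec_of_complex_eq_iff: "vec_of_complex z = vec_of_complex w \<longleftrightarrow> z = w"
  by (auto simp: vec_eq_iff forall_2 vec_of_complex_nth complex_eq_iff)

lemma norm_vec_of_complex: "norm (vec_of_complex z) = norm z"
  by (simp add: norm_vec_def L2_set_def sum_2 vec_of_complex_nth cmod_def)

lemma inner_vec_of_complex: "inner (vec_of_complex z) (vec_of_complex w) = Re (cnj z * w)"
  by (simp add: inner_vec_def sum_2 vec_of_complex_nth)

lemma has_vector_derivative_vec_of_complex_exp:
  "((\<lambda>t. vec_of_complex (c * exp (t *\<^sub>R l))) has_vector_derivative vec_of_complex (c * l * exp (t *\<^sub>R l)))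
    (at t within S)"
proof -
  have "bounded_linear vec_of_complex"
    by (rule bounded_linear_intro[where K = 1])
      (simp_all add: vec_of_complex_add vec_of_complex_scaleR norm_vec_of_complex)
  moreover have "((\<lambda>t. c * exp (t *\<^sub>R l)) has_vector_derivative c * (exp (t *\<^sub>R l) * l)) (at t within S)"
    by (intro has_vector_derivative_mult_right exp_scaleR_has_vector_derivative_right)
  ultimately show ?thesis
    by (auto dest: bounded_linear.has_vector_derivative simp: mult_ac)
qed

lemma eta_eq_0_of_separated:
  assumes "\<And>k. k < n \<Longrightarrow> k \<noteq> i \<Longrightarrow> R < norm (X i - X k)"
  shows "eta \<alpha> R n X i = 0"
proof -
  have "neighbors R n X i = {}"
    using assms unfolding neighbors_def by force
  then show ?thesis
    unfolding eta_def by simp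
qed

lemma hull_dist_ge_of_inner_ge:
  assumes w: "norm w = 1" and n: "n \<ge> 1" and c: "\<And>i. i < n \<Longrightarrow> c \<le> inner w (X i - p)"
  shows "c \<le> hull_dist n X p"
proof -
  define H where "H = convex hull (X ` {..<n})"
  have "H \<subseteq> {y. c + inner w p \<le> inner w y}"
    unfolding H_def using c
    by (intro hull_minimal) (auto simp: inner_diff_right convex_halfspace_ge add.commute le_diff_eq)
  then have "c \<le> dist p y" if "y \<in> H" for y
    using that norm_cauchy_schwarz[of w "y - p"] w by (auto simp: inner_diff_right dist_norm norm_minus_commute)
  moreover have "H \<noteq> {}"
    unfolding H_def using n by (auto simp: lessThan_empty_iff)
  ultimately show ?thesis
    unfolding hull_dist_def H_def[symmetric] infdist_notempty[OF \<open>H \<noteq> {}\<close>]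
    by (intro cINF_greatest) auto
qed

lemma closed_loop_solution_mode:
  fixes l b :: complex and A :: "nat \<Rightarrow> complex"
  assumes root: "quartic k2 (k1 - s1) (k4 - s1 * k2) (k3 - s1 * k1) l = 0"
    and b: "b * (l^2 - of_real s1) = 1"
    and sep: "\<And>t i k. t \<ge> 0 \<Longrightarrow> i < n \<Longrightarrow> k < n \<Longrightarrow> i \<noteq> k \<Longrightarrow> R < norm ((A i - A k) * exp (t *\<^sub>R l))"
    and "r \<le> R"
  shows "closed_loop_solution s1 k1 k2 k3 k4 k5 \<alpha> r R n
    (\<lambda>i t. vec_of_complex (A i * exp (t *\<^sub>R l))) (\<lambda>i t. vec_of_complex (A i * l * exp (t *\<^sub>R l)))
    (\<lambda>i t. vec_of_complex (b * A i * exp (t *\<^sub>R l))) (\<lambda>i t. vec_of_complex (b * A i * l * exp (t *\<^sub>R l)))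
    (\<lambda>t. 0) (\<lambda>t. 0)"
proof -
  have "b * quartic k2 (k1 - s1) (k4 - s1 * k2) (k3 - s1 * k1) l
      = (l * l + of_real k2 * l + of_real k1) * (b * (l^2 - of_real s1)) + b * (of_real k4 * l + of_real k3)"
    unfolding quartic_closed_loop by (simp add: algebra_simps power2_eq_square)
  then have char: "l * l + of_real k2 * l + of_real k1 + b * (of_real k4 * l + of_real k3) = 0"
    using root b by simp
  have v_eq: "c * l * l * e = - (k1 *\<^sub>R (c * e)) - k2 *\<^sub>R (c * l * e) - k3 *\<^sub>R (b * c * e)
      - k4 *\<^sub>R (b * c * l * e)" for c e
  proof -
    have "c * l * l * e - (- (k1 *\<^sub>R (c * e)) - k2 *\<^sub>R (c * l * e) - k3 *\<^sub>R (b * c * e)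
        - k4 *\<^sub>R (b * c * l * e))
        = c * e * (l * l + of_real k2 * l + of_real k1 + b * (of_real k4 * l + of_real k3))"
      by (simp add: scaleR_conv_of_real algebra_simps)
    then show ?thesis
      using char by simp
  qed
  have zeta_eq: "b * c * l * l * e = s1 *\<^sub>R (b * c * e) + c * e" for c e
    using arg_cong[OF b, of "(*) (c * e)"] by (simp add: scaleR_conv_of_real algebra_simps power2_eq_square)
  have separated: "R < norm (vec_of_complex (A i * exp (t *\<^sub>R l)) - vec_of_complex (A k * exp (t *\<^sub>R l)))"
    if "t \<ge> 0" "i < n" "k < n" "i \<noteq> k" for t i k
    using sep[OF that] by (simp add: vec_of_complex_diff norm_vec_of_complex algebra_simps)
  then have eta0: "eta \<alpha> R n (\<lambda>j. vec_of_complex (A j * exp (t *\<^sub>R l))) i = 0"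
    if "t \<ge> 0" "i < n" for t i
    using that by (intro eta_eq_0_of_separated) auto
  note vec_of_complex_simps = vec_of_complex_add vec_of_complex_diff vec_of_complex_uminus
    vec_of_complex_scaleR vec_of_complex_0 vec_of_complex_eq_iff
  show ?thesis
    unfolding closed_loop_solution_def
  proof (intro allI impI conjI)
    fix t :: real and i assume t: "t \<ge> 0" and i: "i < n"
    show "((\<lambda>t. vec_of_complex (A i * exp (t *\<^sub>R l))) has_vector_derivative
        vec_of_complex (A i * l * exp (t *\<^sub>R l))) (at t within {0..})"
      by (rule has_vector_derivative_vec_of_complex_exp)
    show "((\<lambda>t. vec_of_complex (b * A i * exp (t *\<^sub>R l))) has_vector_derivative
        vec_of_complex (b * A i * l * exp (t *\<^sub>R l))) (at t within {0..})"
      by (rule has_vector_derivative_vec_of_complex_exp)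
    show "((\<lambda>t. vec_of_complex (A i * l * exp (t *\<^sub>R l))) has_vector_derivative
        - k1 *\<^sub>R vec_of_complex (A i * exp (t *\<^sub>R l)) - k2 *\<^sub>R vec_of_complex (A i * l * exp (t *\<^sub>R l))
        - k3 *\<^sub>R vec_of_complex (b * A i * exp (t *\<^sub>R l)) - k4 *\<^sub>R vec_of_complex (b * A i * l * exp (t *\<^sub>R l))
        + k5 *\<^sub>R eta \<alpha> R n (\<lambda>j. vec_of_complex (A j * exp (t *\<^sub>R l))) i) (at t within {0..})"
      by (rule has_vector_derivative_eq_rhs[OF has_vector_derivative_vec_of_complex_exp])
        (simp add: eta0[OF t i] vec_of_complex_simps v_eq)
    show "((\<lambda>t. vec_of_complex (b * A i * l * exp (t *\<^sub>R l))) has_vector_derivative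
        s1 *\<^sub>R vec_of_complex (b * A i * exp (t *\<^sub>R l)) + (vec_of_complex (A i * exp (t *\<^sub>R l)) - 0)
        - k5 *\<^sub>R eta \<alpha> R n (\<lambda>j. vec_of_complex (A j * exp (t *\<^sub>R l))) i) (at t within {0..})"
      by (rule has_vector_derivative_eq_rhs[OF has_vector_derivative_vec_of_complex_exp])
        (simp add: eta0[OF t i] vec_of_complex_simps zeta_eq)
  next
    fix t :: real and i k assume "t \<ge> 0" "i < n" "k < n" "i \<noteq> k"
    then show "r < norm (vec_of_complex (A i * exp (t *\<^sub>R l)) - vec_of_complex (A k * exp (t *\<^sub>R l)))"
      using separated \<open>r \<le> R\<close> by fastforce
  qed simp_all
qed

lemma closed_loop_not_fencing:
  fixes l :: complex
  assumes root: "quartic k2 (k1 - s1) (k4 - s1 * k2) (k3 - s1 * k1) l = 0" and Re_l: "Re l \<ge> 0"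
    and k3: "k3 > 0" and k4: "k4 > 0" and rR: "0 < r" "r < R" and n: "n \<ge> 1"
  shows "\<exists>x v \<epsilon> \<zeta> xd vd. closed_loop_solution s1 k1 k2 k3 k4 k5 \<alpha> r R n x v \<epsilon> \<zeta> xd vd \<and>
    \<not> ((\<lambda>t. hull_dist n (\<lambda>i. x i t) (xd t)) \<longlongrightarrow> 0) at_top"
proof -
  have "l^2 \<noteq> of_real s1"
  proof
    assume "l^2 = of_real s1"
    then have "of_real k4 * l + of_real k3 = 0"
      using root unfolding quartic_closed_loop by simp
    then have "Re (of_real k4 * l + of_real k3) = 0"
      by simp
    then have "k4 * Re l + k3 = 0"
      by simp
    moreover have "k4 * Re l \<ge> 0"
      using k4 Re_l by simp
    ultimately show False
      using k3 by linarith
  qed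
  then have b: "1 / (l^2 - of_real s1) * (l^2 - of_real s1) = 1"
    by simp
  txt \<open>Agents spaced 2R apart on a ray all follow one unstable mode: they never interact, and
    their hull keeps distance at least 1 from the target resting at the origin.\<close>
  define A where "A i = complex_of_real (1 + 2 * R * real i)" for i
  have exp_ge_1: "1 \<le> norm (exp (t *\<^sub>R l))" if "t \<ge> 0" for t
    using that Re_l by (simp add: norm_exp_eq_Re)
  have sep: "R < norm ((A i - A k) * exp (t *\<^sub>R l))" if "t \<ge> 0" "i \<noteq> k" for t i k
  proof -
    have "A i - A k = of_real (2 * R * (real i - real k))"
      unfolding A_def by (simp add: algebra_simps)
    then have "norm (A i - A k) = 2 * R * \<bar>real i - real k\<bar>"
      using rR by (simp only: norm_of_real abs_mult abs_of_pos)
    also have "\<dots> \<ge> 2 * R"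
      using that(2) rR by simp
    finally show ?thesis
      using exp_ge_1[OF that(1)] rR mult_mono[of "2 * R" "norm (A i - A k)" 1 "norm (exp (t *\<^sub>R l))"]
      by (simp add: norm_mult)
  qed
  define x where "x i t = vec_of_complex (A i * exp (t *\<^sub>R l))" for i t
  have sol: "closed_loop_solution s1 k1 k2 k3 k4 k5 \<alpha> r R n x
      (\<lambda>i t. vec_of_complex (A i * l * exp (t *\<^sub>R l)))
      (\<lambda>i t. vec_of_complex (1 / (l^2 - of_real s1) * A i * exp (t *\<^sub>R l)))
      (\<lambda>i t. vec_of_complex (1 / (l^2 - of_real s1) * A i * l * exp (t *\<^sub>R l))) (\<lambda>t. 0) (\<lambda>t. 0)"
    unfolding x_def[abs_def] using rR
    by (intro closed_loop_solution_mode[OF root b] sep) auto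
  have far: "1 \<le> hull_dist n (\<lambda>i. x i t) 0" if "t \<ge> 0" for t
  proof (rule hull_dist_ge_of_inner_ge[OF _ n])
    define m where "m = norm (exp (t *\<^sub>R l))"
    have m: "m \<ge> 1"
      unfolding m_def using exp_ge_1[OF that] .
    show "norm (vec_of_complex (exp (t *\<^sub>R l) / of_real m)) = 1"
      using m unfolding norm_vec_of_complex m_def by (simp add: norm_divide)
    fix i
    have "exp (t *\<^sub>R l) * cnj (exp (t *\<^sub>R l)) = of_real (m^2)"
      unfolding m_def by (rule complex_norm_square[symmetric])
    then have "cnj (exp (t *\<^sub>R l) / of_real m) * (A i * exp (t *\<^sub>R l)) = A i * of_real m"
      using m by (simp add: field_simps power2_eq_square)
    then have "inner (vec_of_complex (exp (t *\<^sub>R l) / of_real m)) (x i t - 0) = (1 + 2 * R * real i) * m"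
      unfolding x_def diff_zero inner_vec_of_complex by (simp add: A_def)
    moreover have "1 * 1 \<le> (1 + 2 * R * real i) * m"
      using m rR by (intro mult_mono) auto
    ultimately show "1 \<le> inner (vec_of_complex (exp (t *\<^sub>R l) / of_real m)) (x i t - 0)"
      by simp
  qed
  have "\<not> ((\<lambda>t. hull_dist n (\<lambda>i. x i t) 0) \<longlongrightarrow> 0) at_top"
  proof
    assume "((\<lambda>t. hull_dist n (\<lambda>i. x i t) 0) \<longlongrightarrow> 0) at_top"
    moreover have "eventually (\<lambda>t. 1 \<le> hull_dist n (\<lambda>i. x i t) 0) at_top"
      using eventually_ge_at_top[of 0] by eventually_elim (rule far)
    ultimately have "1 \<le> (0::real)"
      by (rule tendsto_lowerbound) simp
    then show False
      by simp
  qed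
  with sol show ?thesis
    by blast
qed

lemma gain_condition_iff_hurwitz_det3:
  fixes k1 k2 k3 k4 s1 :: real
  assumes k2: "k2 > 0" and a3: "k4 - s1 * k2 > 0" and a4: "k3 - s1 * k1 > 0"
  shows "(k4 - s1 * k2 - k2^2 * (k3 - s1 * k1) / (k1 * k2 - k4) > 0 \<and> (k1 * k2 - k4) / k2 > 0)
    \<longleftrightarrow> hurwitz_det3 k2 (k1 - s1) (k4 - s1 * k2) (k3 - s1 * k1) > 0"
proof -
  define d where "d = k1 * k2 - k4"
  have det: "hurwitz_det3 k2 (k1 - s1) (k4 - s1 * k2) (k3 - s1 * k1) = (k4 - s1 * k2) * d - k2^2 * (k3 - s1 * k1)"
    unfolding hurwitz_det3_def d_def by (simp add: algebra_simps)
  have "k2^2 * (k3 - s1 * k1) > 0"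
    using k2 a4 by simp
  then have "(k4 - s1 * k2) * d - k2^2 * (k3 - s1 * k1) > 0 \<Longrightarrow> d > 0"
    using a3 by (smt (verit) mult_nonneg_nonpos)
  then show ?thesis
    unfolding det d_def[symmetric] using k2
    by (auto simp: zero_less_divide_iff field_simps)
qed

theorem lemma3p4:
  fixes r R s1 k1 k2 k3 k4 k5 :: real and \<alpha> :: "real \<Rightarrow> real" and n :: nat
  assumes "0 < r" and "r < R"
    and "continuous_on {r<..} \<alpha>"
    and "\<forall>s\<ge>R. \<alpha> s = 0"
    and "filterlim \<alpha> at_top (at_right r)"
    and "antimono_on {r<..R} \<alpha>"
    and "s1 \<le> 0"
    and "k1 > 0" and "k2 > 0" and "k3 > 0" and "k4 > 0" and "k5 > 0"
    and "n \<ge> 1"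
  shows "(\<forall>x v \<epsilon> \<zeta> xd vd.
            closed_loop_solution s1 k1 k2 k3 k4 k5 \<alpha> r R n x v \<epsilon> \<zeta> xd vd \<longrightarrow>
            ((\<lambda>t. hull_dist n (\<lambda>i. x i t) (xd t)) \<longlongrightarrow> 0) at_top)
         \<longleftrightarrow>
         (k4 - s1 * k2 - k2\<^sup>2 * (k3 - s1 * k1) / (k1 * k2 - k4) > 0 \<and>
          (k1 * k2 - k4) / k2 > 0)"
proof -
  have "s1 * k1 \<le> 0" "s1 * k2 \<le> 0"
    using assms by (simp_all add: mult_nonpos_nonneg)
  then have coeffs: "k2 > 0" "k1 - s1 > 0" "k4 - s1 * k2 > 0" "k3 - s1 * k1 > 0"
    using assms by linarith+
  have stable_iff: "(\<forall>z. quartic k2 (k1 - s1) (k4 - s1 * k2) (k3 - s1 * k1) z = 0 \<longrightarrow> Re z < 0) \<longleftrightarrow>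
      (k4 - s1 * k2 - k2\<^sup>2 * (k3 - s1 * k1) / (k1 * k2 - k4) > 0 \<and> (k1 * k2 - k4) / k2 > 0)"
    using quartic_stable_iff_hurwitz[OF coeffs] gain_condition_iff_hurwitz_det3[OF coeffs(1,3,4)] by simp
  show ?thesis
    unfolding stable_iff[symmetric]
    using closed_loop_not_fencing[OF _ _ \<open>k3 > 0\<close> \<open>k4 > 0\<close> \<open>0 < r\<close> \<open>r < R\<close> \<open>n \<ge> 1\<close>]
      closed_loop_fences_target[OF _ \<open>k3 > 0\<close> \<open>s1 \<le> 0\<close> \<open>n \<ge> 1\<close>]
    by (meson not_le)
qed

end
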